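(* Let $G$ be a framed graph with framing $f$, and let $a,b\in V(G)$ be distinct vertices. Let $\widetilde G_{ab}$ be the framed graph on $V(G)$ obtained from $G$ as follows: for every vertex $c\ne a,b$, the adjacency of $c$ and $a$ is toggled iff $c$ is adjacent to $b$ in $G$; the adjacency of $a$ and $b$ is toggled iff $f(b)=1$; the framing of $a$ becomes $f(a)+f(b)\pmod 2$; all other adjacencies and framings are unchanged. Then $$D(\widetilde G_{ab})=\widetilde{D(G)}_{ab},$$ where $D(\cdot)$ denotes the nondegeneracy delta-matroid.
   Context: A framed graph is a simple graph $G$ with a map $f:V(G)\to\{0,1\}$; its adjacency matrix over $\mathbb{F}_2$ has diagonal entry $f(v)$ at $v$ and the usual off-diagonal entries. Its nondegeneracy delta-matroid is $D(G)=(V(G);\{U\subseteq V(G)\mid$ the adjacency matrix of the induced framed subgraph $G_U$ is nondegenerate over $\mathbb{F}_2\})$ (empty matrix counts as nondegenerate). For a set system $D=(E;\Phi)$ ($E$ finite, $\Phi\subseteq 2^E$ nonempty) and distinct $a,b\in E$, the sliding of $a$ over $b$ is $\widetilde D_{ab}=(E;\widetilde\Phi_{ab})$ with $\widetilde\Phi_{ab}=\Phi\,\Delta\,\{\phi\sqcup\{a\}\mid \phi\subseteq E\setminus\{a,b\},\ \phi\sqcup\{b\}\in\Phi\}$. *)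

theory Defs
  imports "HOL-Library.Z2" "HOL-Combinatorics.Permutations"
begin

definition framed_graph :: "'a set \<Rightarrow> ('a \<Rightarrow> 'a \<Rightarrow> bool) \<Rightarrow> ('a \<Rightarrow> bit) \<Rightarrow> bool" where
  "framed_graph V Adj fr \<longleftrightarrow> finite V \<and> (\<forall>x y. Adj x y \<longrightarrow> x \<in> V \<and> y \<in> V)
     \<and> (\<forall>x y. Adj x y \<longleftrightarrow> Adj y x) \<and> (\<forall>x. \<not> Adj x x)"

definition adj_matrix :: "('a \<Rightarrow> 'a \<Rightarrow> bool) \<Rightarrow> ('a \<Rightarrow> bit) \<Rightarrow> 'a \<Rightarrow> 'a \<Rightarrow> bit" where
  "adj_matrix Adj fr x y = (if x = y then fr x else of_bool (Adj x y))"

definition det_on :: "'a set \<Rightarrow> ('a \<Rightarrow> 'a \<Rightarrow> 'r::comm_ring_1) \<Rightarrow> 'r" where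
  "det_on U M = (\<Sum>p\<in>{p. p permutes U}. of_int (sign p) * (\<Prod>u\<in>U. M u (p u)))"

text \<open>Nondegeneracy delta-matroid: the feasible sets U \<subseteq> V whose induced framed subgraph
  has nondegenerate adjacency matrix over F_2 (the empty matrix has determinant 1).\<close>
definition nondeg_feasible :: "'a set \<Rightarrow> ('a \<Rightarrow> 'a \<Rightarrow> bool) \<Rightarrow> ('a \<Rightarrow> bit) \<Rightarrow> 'a set set" where
  "nondeg_feasible V Adj fr = {U. U \<subseteq> V \<and> det_on U (adj_matrix Adj fr) \<noteq> 0}"

definition slide_sys :: "'a set \<Rightarrow> 'a set set \<Rightarrow> 'a \<Rightarrow> 'a \<Rightarrow> 'a set set" where
  "slide_sys E Phi a b = Phi \<union> {\<phi> \<union> {a} | \<phi>. \<phi> \<subseteq> E - {a, b} \<and> \<phi> \<union> {b} \<in> Phi}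
      - (Phi \<inter> {\<phi> \<union> {a} | \<phi>. \<phi> \<subseteq> E - {a, b} \<and> \<phi> \<union> {b} \<in> Phi})"

definition slide_adj :: "'a set \<Rightarrow> ('a \<Rightarrow> 'a \<Rightarrow> bool) \<Rightarrow> ('a \<Rightarrow> bit) \<Rightarrow> 'a \<Rightarrow> 'a \<Rightarrow> 'a \<Rightarrow> 'a \<Rightarrow> bool" where
  "slide_adj V Adj fr a b x y =
     (if {x, y} = {a, b} then (Adj x y \<noteq> (fr b = 1))
      else if x = a \<and> y \<in> V - {a, b} then (Adj x y \<noteq> Adj b y)
      else if y = a \<and> x \<in> V - {a, b} then (Adj x y \<noteq> Adj b x)
      else Adj x y)"

definition slide_frame :: "('a \<Rightarrow> bit) \<Rightarrow> 'a \<Rightarrow> 'a \<Rightarrow> 'a \<Rightarrow> bit" where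
  "slide_frame fr a b = fr(a := fr a + fr b)"

end

theory Submission
  imports Defs
begin

text \<open>Sliding a over b replaces the adjacency matrix A by E A E^T, where E adds row b to
  row a. Take U \<subseteq> V. If a \<notin> U the principal submatrix on U is untouched; if a, b \<in> U
  it undergoes a congruence by a unimodular matrix, so its determinant does not change.
  If a \<in> U and b \<notin> U, expanding multilinearly in row a and column a gives det A[U],
  two cross terms that are transposes of each other and cancel over F_2, and the
  principal minor A[U - a + b]. Hence U becomes feasible or infeasible exactly when
  U - a + b is feasible, which is the definition of sliding a set system.\<close>

lemma det_on_cong:
  assumes "\<And>u v. u \<in> U \<Longrightarrow> v \<in> U \<Longrightarrow> M u v = N u v"
  shows "det_on U M = det_on U N"
  unfolding det_on_def
  by (intro sum.cong refl arg_cong2[where f = "(*)"] prod.cong)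
     (auto intro: assms permutes_in_image[THEN iffD2])

lemma det_on_additive_row:
  assumes "finite U" and "a \<in> U"
    and "\<And>v. M a v = N a v + K a v"
    and "\<And>u v. u \<noteq> a \<Longrightarrow> M u v = N u v" and "\<And>u v. u \<noteq> a \<Longrightarrow> K u v = N u v"
  shows "det_on U M = det_on U N + det_on U K"
proof -
  have "(\<Prod>u\<in>U. M u (p u)) = (\<Prod>u\<in>U. N u (p u)) + (\<Prod>u\<in>U. K u (p u))" for p
  proof -
    have "(\<Prod>u\<in>U - {a}. M u (p u)) = (\<Prod>u\<in>U - {a}. N u (p u))"
      and "(\<Prod>u\<in>U - {a}. K u (p u)) = (\<Prod>u\<in>U - {a}. N u (p u))"
      using assms(4,5) by (auto intro: prod.cong)
    then show ?thesis
      unfolding prod.remove[OF assms(1,2)] assms(3) distrib_right by simp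
  qed
  then show ?thesis
    unfolding det_on_def by (simp add: distrib_left sum.distrib)
qed

lemma det_on_transpose:
  assumes "finite U"
  shows "det_on U (\<lambda>x y. M y x) = det_on U M"
proof -
  have prod_inv: "(\<Prod>u\<in>U. M (p u) u) = (\<Prod>u\<in>U. M u (inv p u))" if p: "p permutes U" for p
  proof -
    have "(\<Prod>u\<in>U. M u (inv p u)) = (\<Prod>u\<in>U. M (p u) (inv p (p u)))"
      using prod.permute[OF p] by (simp add: comp_def)
    then show ?thesis
      by (simp add: permutes_inverses(2)[OF p])
  qed
  have sign_inv: "sign (inv p) = sign p" if "p permutes U" for p
    using that assms by (metis permutation_permutes sign_inverse)
  have "det_on U (\<lambda>x y. M y x)
      = (\<Sum>p\<in>{p. p permutes U}. of_int (sign (inv p)) * (\<Prod>u\<in>U. M u (inv p u)))"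
    unfolding det_on_def by (intro sum.cong refl) (simp add: prod_inv sign_inv)
  also have "\<dots> = det_on U M"
    unfolding det_on_def by (rule sum_permutations_inverse[symmetric])
  finally show ?thesis .
qed

lemma det_on_eq_rows:
  assumes "finite U" and "a \<in> U" and "b \<in> U" and "a \<noteq> b" and "\<And>v. M a v = M b v"
  shows "det_on U M = 0"
proof -
  define t where "t = Transposition.transpose a b"
  define f where "f p = of_int (sign p) * (\<Prod>u\<in>U. M u (p u))" for p
  define Even where "Even = {p. p permutes U \<and> evenperm p}"
  define Odd where "Odd = {p. p permutes U \<and> \<not> evenperm p}"
  have t: "t permutes U" "permutation t" "t \<circ> t = id"
    unfolding t_def using assms(2,3) by (auto intro: permutes_swap_id permutation_swap_id)
  have perm: "permutation p" if "p permutes U" for p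
    using that assms(1) permutation_permutes by blast
  have flip: "p \<circ> t permutes U \<and> evenperm (p \<circ> t) = (\<not> evenperm p)" if "p permutes U" for p
    using permutes_compose[OF t(1) that] evenperm_comp[OF perm[OF that] t(2)] assms(4)
    by (simp add: t_def evenperm_swap)
  have f_flip: "f (p \<circ> t) = - f p" if p: "p permutes U" for p
  proof -
    have "(\<Prod>u\<in>U. M u (p (t u))) = (\<Prod>u\<in>U. M (t u) (p (t (t u))))"
      using prod.permute[OF t(1)] by (simp add: comp_def)
    also have "\<dots> = (\<Prod>u\<in>U. M u (p u))"
    proof (intro prod.cong refl)
      fix u
      have "t (t u) = u" using t(3) by (simp add: fun_eq_iff)
      moreover have "M (t u) v = M u v" for v
        using assms(5) by (simp add: t_def Transposition.transpose_def)
      ultimately show "M (t u) (p (t (t u))) = M u (p u)" by simp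
    qed
    finally show ?thesis
      unfolding f_def using sign_compose[OF perm[OF p] t(2)] assms(4)
      by (simp add: t_def sign_swap_id)
  qed
  have "sum f Odd = sum (\<lambda>p. f (p \<circ> t)) Even"
    by (rule sum.reindex_bij_witness[where i = "\<lambda>p. p \<circ> t" and j = "\<lambda>p. p \<circ> t"])
       (auto simp: Even_def Odd_def flip o_assoc[symmetric] t(3))
  also have "\<dots> = - sum f Even"
    by (simp add: Even_def f_flip sum_negf)
  finally have "sum f Even + sum f Odd = 0" by simp
  moreover have "{p. p permutes U} = Even \<union> Odd" and "Even \<inter> Odd = {}"
    unfolding Even_def Odd_def by auto
  moreover have "finite Even" "finite Odd"
    unfolding Even_def Odd_def using finite_permutations[OF assms(1)] by (auto intro: finite_subset)
  ultimately show ?thesis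
    unfolding det_on_def f_def[symmetric] by (simp add: sum.union_disjoint)
qed

lemma det_on_reindex:
  fixes s :: "'a \<Rightarrow> 'b" and M :: "'b \<Rightarrow> 'b \<Rightarrow> 'r::comm_ring_1"
  assumes "finite U" and "inj_on s U"
  shows "det_on (s ` U) M = det_on U (\<lambda>x y. M (s x) (s y))"
proof -
  define s' where "s' = inv_into U s"
  define fwd where "fwd p = (\<lambda>x. if x \<in> s ` U then s (p (s' x)) else x)" for p
  define bwd where "bwd q = (\<lambda>x. if x \<in> U then s' (q (s x)) else x)" for q
  have bij: "bij_betw s U (s ` U)" "bij_betw s' (s ` U) U"
    using assms(2) by (auto simp: s'_def bij_betw_def inj_on_inv_into)
  have s's: "x \<in> U \<Longrightarrow> s' (s x) = x" for x
    using assms(2) by (simp add: s'_def)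
  have ss': "y \<in> s ` U \<Longrightarrow> s (s' y) = y" for y
    by (simp add: s'_def f_inv_into_f)
  have fwd: "fwd p permutes s ` U" "sign (fwd p) = sign p" if "p permutes U" for p
  proof -
    interpret permutes_bij_finite p U "s ` U" s s' "fwd p"
      using that bij assms(1) s's by unfold_locales (auto simp: fwd_def)
    show "fwd p permutes s ` U" "sign (fwd p) = sign p"
      using permutes_p' sign_p' by simp_all
  qed
  have bwd: "bwd q permutes U" if "q permutes s ` U" for q
  proof -
    interpret permutes_bij q "s ` U" U s' s "bwd q"
      using that bij ss' by unfold_locales (auto simp: bwd_def)
    show ?thesis using permutes_p' .
  qed
  show ?thesis
    unfolding det_on_def
  proof (rule sum.reindex_bij_witness[where i = bwd and j = fwd, symmetric])
    fix p assume "p \<in> {p. p permutes U}"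
    then have p: "p permutes U" by simp
    show "fwd p \<in> {q. q permutes s ` U}" using fwd(1)[OF p] by simp
    show "bwd (fwd p) = p"
      using p s's by (auto simp: fun_eq_iff fwd_def bwd_def permutes_in_image permutes_not_in)
    have "(\<Prod>x\<in>s ` U. M x (fwd p x)) = (\<Prod>u\<in>U. M (s u) (fwd p (s u)))"
      using prod.reindex[OF assms(2)] by (simp add: comp_def)
    also have "\<dots> = (\<Prod>u\<in>U. M (s u) (s (p u)))"
      using s's by (intro prod.cong refl) (simp add: fwd_def)
    finally show "of_int (sign (fwd p)) * (\<Prod>x\<in>s ` U. M x (fwd p x))
        = of_int (sign p) * (\<Prod>u\<in>U. M (s u) (s (p u)))"
      using fwd(2)[OF p] by simp
  next
    fix q assume "q \<in> {q. q permutes s ` U}"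
    then have q: "q permutes s ` U" by simp
    show "bwd q \<in> {p. p permutes U}" using bwd[OF q] by simp
    show "fwd (bwd q) = q"
      using q ss' bij(2) by (auto simp: fun_eq_iff fwd_def bwd_def permutes_in_image permutes_not_in
          bij_betw_apply)
  qed
qed

definition add_row :: "'a \<Rightarrow> 'a \<Rightarrow> ('a \<Rightarrow> 'a \<Rightarrow> 'r::monoid_add) \<Rightarrow> 'a \<Rightarrow> 'a \<Rightarrow> 'r" where
  "add_row a b M u v = M u v + (if u = a then M b v else 0)"

definition add_col :: "'a \<Rightarrow> 'a \<Rightarrow> ('a \<Rightarrow> 'a \<Rightarrow> 'r::monoid_add) \<Rightarrow> 'a \<Rightarrow> 'a \<Rightarrow> 'r" where
  "add_col a b M u v = M u v + (if v = a then M u b else 0)"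

lemma det_on_add_row:
  assumes "finite U" and "a \<in> U"
  shows "det_on U (add_row a b M) = det_on U M + det_on U (\<lambda>u. M (if u = a then b else u))"
  by (rule det_on_additive_row[OF assms]) (auto simp: add_row_def)

lemma det_on_add_col:
  assumes "finite U" and "a \<in> U"
  shows "det_on U (add_col a b M) = det_on U M + det_on U (\<lambda>u v. M u (if v = a then b else v))"
proof -
  have "add_col a b M = (\<lambda>x y. add_row a b (\<lambda>x y. M y x) y x)"
    by (simp add: fun_eq_iff add_row_def add_col_def)
  then have "det_on U (add_col a b M) = det_on U (add_row a b (\<lambda>x y. M y x))"
    using det_on_transpose[OF assms(1), of "add_row a b (\<lambda>x y. M y x)"] by (simp only:)
  also have "\<dots> = det_on U (\<lambda>x y. M y x) + det_on U (\<lambda>u v. M v (if u = a then b else u))"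
    by (rule det_on_add_row[OF assms])
  also have "\<dots> = det_on U M + det_on U (\<lambda>u v. M u (if v = a then b else v))"
    by (intro arg_cong2[where f = "(+)"] det_on_transpose[OF assms(1)])
  finally show ?thesis .
qed

lemma det_on_add_row_eq:
  assumes "finite U" and "a \<in> U" and "b \<in> U" and "a \<noteq> b"
  shows "det_on U (add_row a b M) = det_on U M"
  using det_on_add_row[OF assms(1,2), of b M] det_on_eq_rows[OF assms, of "\<lambda>u. M (if u = a then b else u)"]
  by simp

lemma det_on_add_col_eq:
  assumes "finite U" and "a \<in> U" and "b \<in> U" and "a \<noteq> b"
  shows "det_on U (add_col a b M) = det_on U M"
proof -
  have "det_on U (\<lambda>u v. M v (if u = a then b else u)) = 0"
    by (rule det_on_eq_rows[OF assms]) simp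
  then show ?thesis
    using det_on_add_col[OF assms(1,2), of b M]
      det_on_transpose[OF assms(1), of "\<lambda>u v. M u (if v = a then b else v)"] by (simp only:) simp
qed

lemma det_on_add_row_add_col_notin:
  assumes "a \<notin> U"
  shows "det_on U (add_row a b (add_col a b M)) = det_on U M"
  using assms by (intro det_on_cong) (auto simp: add_row_def add_col_def)

lemma det_on_add_row_add_col_swap:
  fixes M :: "'a \<Rightarrow> 'a \<Rightarrow> bit"
  assumes "finite U" and "a \<in> U" and "b \<notin> U" and sym: "\<And>x y. M x y = M y x"
  shows "det_on U (add_row a b (add_col a b M)) = det_on U M + det_on (insert b (U - {a})) M"
proof -
  define s where "s u = (if u = a then b else u)" for u
  define R where "R u v = M (s u) v" for u v
  have row: "det_on U (add_row a b (add_col a b M))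
      = det_on U (add_col a b M) + det_on U (\<lambda>u. add_col a b M (s u))"
    unfolding s_def by (rule det_on_add_row[OF assms(1,2)])
  have col: "det_on U (add_col a b M) = det_on U M + det_on U R"
  proof -
    have "det_on U (\<lambda>u v. M u (s v)) = det_on U R"
      using det_on_transpose[OF assms(1), of R] by (simp add: R_def sym)
    then show ?thesis
      unfolding s_def using det_on_add_col[OF assms(1,2), of b M] by (simp only:)
  qed
  have "(\<lambda>u. add_col a b M (s u)) = add_col a b R"
    by (simp add: fun_eq_iff add_col_def R_def)
  then have swapped: "det_on U (\<lambda>u. add_col a b M (s u)) = det_on U R + det_on U (\<lambda>u v. R u (s v))"
    unfolding s_def using det_on_add_col[OF assms(1,2), of b R] by (simp only:)
  have "inj_on s U"
    using assms(3) by (auto simp: s_def inj_on_def)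
  then have "det_on U (\<lambda>u v. R u (s v)) = det_on (s ` U) M"
    unfolding R_def by (rule det_on_reindex[OF assms(1), symmetric])
  also have "s ` U = insert b (U - {a})"
    using assms(2,3) by (auto simp: s_def)
  finally have "det_on U (\<lambda>u v. R u (s v)) = det_on (insert b (U - {a})) M" .
  moreover have "x + y + (y + z) = x + (z::bit)" for x y z
    by (cases x; cases y; cases z) simp_all
  ultimately show ?thesis
    using row col swapped by (simp only:)
qed

lemma adj_matrix_slide:
  assumes "framed_graph V Adj fr" and "a \<noteq> b" and "x \<in> V" and "y \<in> V"
  shows "adj_matrix (slide_adj V Adj fr a b) (slide_frame fr a b) x y
           = add_row a b (add_col a b (adj_matrix Adj fr)) x y"
proof -
  have sym: "Adj u v = Adj v u" and irrefl: "\<not> Adj u u" for u v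
    using assms(1) unfolding framed_graph_def by blast+
  have of_bool_xor: "(of_bool (P \<noteq> Q) :: bit) = of_bool P + of_bool Q" for P Q
    by (cases P; cases Q) simp_all
  show ?thesis
    using assms(2-4) sym[of a b] sym[of b x] irrefl
    by (cases "fr a"; cases "fr b")
       (auto simp: adj_matrix_def slide_adj_def slide_frame_def add_row_def add_col_def
         doubleton_eq_iff of_bool_xor)
qed

lemma det_on_slide:
  assumes "framed_graph V Adj fr" and "a \<noteq> b" and "U \<subseteq> V"
  shows "det_on U (adj_matrix (slide_adj V Adj fr a b) (slide_frame fr a b))
           = det_on U (adj_matrix Adj fr)
             + (if a \<in> U \<and> b \<notin> U then det_on (insert b (U - {a})) (adj_matrix Adj fr) else 0)"
proof -
  define A where "A = adj_matrix Adj fr"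
  have fin: "finite U"
    using assms(1,3) finite_subset unfolding framed_graph_def by blast
  have sym: "A x y = A y x" for x y
    using assms(1) unfolding A_def adj_matrix_def framed_graph_def by auto
  have "det_on U (adj_matrix (slide_adj V Adj fr a b) (slide_frame fr a b))
      = det_on U (add_row a b (add_col a b A))"
    using assms(3) by (intro det_on_cong) (simp add: A_def adj_matrix_slide[OF assms(1,2)] subsetD)
  also have "\<dots> = det_on U A + (if a \<in> U \<and> b \<notin> U then det_on (insert b (U - {a})) A else 0)"
  proof (cases "a \<in> U")
    case False
    then show ?thesis by (simp add: det_on_add_row_add_col_notin)
  next
    case a: True
    show ?thesis
    proof (cases "b \<in> U")
      case True
      then show ?thesis
        by (simp only: det_on_add_row_eq[OF fin a True assms(2)] det_on_add_col_eq[OF fin a True assms(2)])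
          simp
    next
      case False
      then show ?thesis
        by (simp only: det_on_add_row_add_col_swap[OF fin a False sym]) (simp add: a)
    qed
  qed
  finally show ?thesis unfolding A_def .
qed

lemma mem_slide_sys_iff:
  "X \<in> slide_sys E Phi a b \<longleftrightarrow>
     (X \<in> Phi) \<noteq> (a \<in> X \<and> X - {a} \<subseteq> E - {a, b} \<and> insert b (X - {a}) \<in> Phi)"
proof -
  have "(\<exists>\<phi>. X = \<phi> \<union> {a} \<and> \<phi> \<subseteq> E - {a, b} \<and> \<phi> \<union> {b} \<in> Phi) \<longleftrightarrow>
        a \<in> X \<and> X - {a} \<subseteq> E - {a, b} \<and> insert b (X - {a}) \<in> Phi"
  proof
    assume "\<exists>\<phi>. X = \<phi> \<union> {a} \<and> \<phi> \<subseteq> E - {a, b} \<and> \<phi> \<union> {b} \<in> Phi"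
    then obtain \<phi> where "X = \<phi> \<union> {a}" "\<phi> \<subseteq> E - {a, b}" "\<phi> \<union> {b} \<in> Phi"
      by blast
    moreover from this have "X - {a} = \<phi>" by auto
    ultimately show "a \<in> X \<and> X - {a} \<subseteq> E - {a, b} \<and> insert b (X - {a}) \<in> Phi"
      by auto
  qed (intro exI[of _ "X - {a}"], auto)
  then show ?thesis
    unfolding slide_sys_def by auto
qed

theorem theorem4p2:
  fixes V :: "'a set" and Adj :: "'a \<Rightarrow> 'a \<Rightarrow> bool" and fr :: "'a \<Rightarrow> bit" and a b :: 'a
  assumes "framed_graph V Adj fr" and "a \<in> V" and "b \<in> V" and "a \<noteq> b"
  shows "nondeg_feasible V (slide_adj V Adj fr a b) (slide_frame fr a b)
           = slide_sys V (nondeg_feasible V Adj fr) a b"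
proof (rule set_eqI)
  fix U
  let ?d = "\<lambda>W. det_on W (adj_matrix Adj fr)"
  have bit_sum_nonzero: "(x + y \<noteq> 0) \<longleftrightarrow> (x \<noteq> 0) \<noteq> (y \<noteq> (0::bit))" for x y
    by (cases x; cases y) simp_all
  have "U \<in> slide_sys V (nondeg_feasible V Adj fr) a b \<longleftrightarrow>
      U \<subseteq> V \<and> (?d U \<noteq> 0) \<noteq> (a \<in> U \<and> b \<notin> U \<and> ?d (insert b (U - {a})) \<noteq> 0)"
    unfolding mem_slide_sys_iff nondeg_feasible_def using assms(2-4) by auto
  also have "\<dots> \<longleftrightarrow> U \<in> nondeg_feasible V (slide_adj V Adj fr a b) (slide_frame fr a b)"
  proof (cases "U \<subseteq> V")
    case True
    then show ?thesis
      using det_on_slide[OF assms(1,4) True]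
      by (cases "a \<in> U \<and> b \<notin> U") (simp_all add: nondeg_feasible_def bit_sum_nonzero del: bit_not_zero_iff)
  qed (simp add: nondeg_feasible_def)
  finally show "U \<in> nondeg_feasible V (slide_adj V Adj fr a b) (slide_frame fr a b)
      \<longleftrightarrow> U \<in> slide_sys V (nondeg_feasible V Adj fr) a b" ..
qed

end
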